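(* For every formula $\phi$, $\mathbf{GLP}\vdash[1]\phi$ if and only if $\mathbf{GLP}\vdash Q_k(\phi)$ for some $k\geq 1$.
   Context: $\mathbf{GLP}$ is the propositional polymodal logic with modalities $[0],[1],\dots$ ($\langle k\rangle:=\neg[k]\neg$) axiomatized by classical tautologies; $[k](\phi\to\psi)\to([k]\phi\to[k]\psi)$; $[k]([k]\phi\to\phi)\to[k]\phi$; $\langle j\rangle\phi\to[k]\langle j\rangle\phi$ for $j<k$; $[j]\phi\to[k]\phi$ for $j\leq k$; rules modus ponens and necessitation. Define $Q_1(\phi):=\phi$ and $Q_{i+1}(\phi):=\phi\lor[0]Q_i(\phi)$. *)

theory Defs
  imports Main
begin

datatype fm =
    Var nat
  | Bot
  | Imp fm fm
  | Box nat fm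

definition Neg :: "fm \<Rightarrow> fm" where
  "Neg p = Imp p Bot"

definition Or :: "fm \<Rightarrow> fm \<Rightarrow> fm" where
  "Or p q = Imp (Neg p) q"

definition And :: "fm \<Rightarrow> fm \<Rightarrow> fm" where
  "And p q = Neg (Imp p (Neg q))"

definition Dia :: "nat \<Rightarrow> fm \<Rightarrow> fm" where
  "Dia k p = Neg (Box k (Neg p))"

fun beval :: "(fm \<Rightarrow> bool) \<Rightarrow> fm \<Rightarrow> bool" where
  "beval v (Var n) = v (Var n)"
| "beval v Bot = False"
| "beval v (Imp p q) = (beval v p \<longrightarrow> beval v q)"
| "beval v (Box k p) = v (Box k p)"

definition tautology :: "fm \<Rightarrow> bool" where
  "tautology p = (\<forall>v. beval v p)"

inductive GLP_prv :: "fm \<Rightarrow> bool" where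
  taut: "tautology p \<Longrightarrow> GLP_prv p"
| K: "GLP_prv (Imp (Box k (Imp p q)) (Imp (Box k p) (Box k q)))"
| Loeb: "GLP_prv (Imp (Box k (Imp (Box k p) p)) (Box k p))"
| Ax3: "j < k \<Longrightarrow> GLP_prv (Imp (Dia j p) (Box k (Dia j p)))"
| Ax4: "j \<le> k \<Longrightarrow> GLP_prv (Imp (Box j p) (Box k p))"
| MP: "GLP_prv (Imp p q) \<Longrightarrow> GLP_prv p \<Longrightarrow> GLP_prv q"
| Nec: "GLP_prv p \<Longrightarrow> GLP_prv (Box k p)"

fun Q :: "nat \<Rightarrow> fm \<Rightarrow> fm" where
  "Q 0 p = p"
| "Q (Suc 0) p = p"
| "Q (Suc (Suc i)) p = Or p (Box 0 (Q (Suc i) p))"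

end

theory Submission
  imports Defs
begin

(* If Q_k \<phi> is provable, necessitation gives [1]Q_k \<phi>, and [1]Q_(k+1) \<phi> \<longrightarrow> [1]\<phi>
is derivable by induction on k.

Conversely, suppose no Q_k \<phi> is provable. Let Qprv \<phi> consist of the x for which
\<phi> \<or> [0](\<phi> \<or> ... [0]x) is provable for all sufficiently deep nestings. Then
Qprv \<phi> together with \<not>\<phi> is consistent, and so is the extension that makes a maximal
consistent set see a given one along the canonical [0]-relation R0. Iterating gives maximal
consistent sets chain 0, chain 1, ..., all containing \<not>\<phi>, where chain (n+1) sees chain n.
Interpret [0]p as "p lies in every maximal consistent set seen from the chain", [1]p as
"p and [1]p lie in almost all chain n", and [k]p for k \<ge> 2 as true. This Boolean valuation
of the boxed formulas verifies every theorem of GLP -- axiom 3 holds because every world seen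
from the chain is seen from all later members -- but falsifies [1]\<phi>. *)

fun imps :: "fm list \<Rightarrow> fm \<Rightarrow> fm" where
  "imps [] c = c"
| "imps (a # L) c = Imp a (imps L c)"

fun Ors :: "fm list \<Rightarrow> fm" where
  "Ors [] = Bot"
| "Ors (a # L) = Or a (Ors L)"

lemma beval_derived [simp]:
  "beval v (Neg a) = (\<not> beval v a)"
  "beval v (Or a b) = (beval v a \<or> beval v b)"
  "beval v (And a b) = (beval v a \<and> beval v b)"
  "beval v (Dia k a) = (\<not> v (Box k (Neg a)))"
  by (auto simp: Neg_def Or_def And_def Dia_def)

lemma beval_imps [simp]: "beval v (imps L c) = ((\<forall>a\<in>set L. beval v a) \<longrightarrow> beval v c)"
  by (induction L) auto

lemma beval_Ors [simp]: "beval v (Ors L) = (\<exists>a\<in>set L. beval v a)"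
  by (induction L) auto

lemma taut_consequence:
  assumes "\<forall>a\<in>set P. GLP_prv a"
    and "\<And>v. \<forall>a\<in>set P. beval v a \<Longrightarrow> beval v c"
  shows "GLP_prv c"
proof -
  have "GLP_prv (imps P c)"
    using assms(2) by (intro GLP_prv.taut) (simp add: tautology_def)
  with assms(1) show ?thesis
    by (induction P) (auto intro: GLP_prv.MP)
qed

lemma prv_imp_trans [trans]: "GLP_prv (Imp a b) \<Longrightarrow> GLP_prv (Imp b c) \<Longrightarrow> GLP_prv (Imp a c)"
  by (rule taut_consequence[of "[Imp a b, Imp b c]"]) auto

lemma prv_box_mono: "GLP_prv (Imp a b) \<Longrightarrow> GLP_prv (Imp (Box k a) (Box k b))"
  by (rule GLP_prv.MP[OF GLP_prv.K GLP_prv.Nec])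

lemma prv_box_mono2:
  "GLP_prv (Imp a (Imp b c)) \<Longrightarrow> GLP_prv (Imp (Box k a) (Imp (Box k b) (Box k c)))"
  by (rule prv_imp_trans[OF prv_box_mono GLP_prv.K])

lemma prv_box_box: "GLP_prv (Imp (Box k p) (Box k (Box k p)))"
proof -
  define q where "q = And p (Box k p)"
  have "GLP_prv (Imp (Box k q) (Box k p))"
    by (rule prv_box_mono, rule taut_consequence[of "[]"]) (auto simp: q_def)
  then have "GLP_prv (Imp p (Imp (Box k q) q))"
    by (intro taut_consequence[of "[Imp (Box k q) (Box k p)]"]) (auto simp: q_def)
  then have "GLP_prv (Imp (Box k p) (Box k (Imp (Box k q) q)))"
    by (rule prv_box_mono)
  also have "GLP_prv (Imp (Box k (Imp (Box k q) q)) (Box k q))"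
    by (rule GLP_prv.Loeb)
  also have "GLP_prv (Imp (Box k q) (Box k (Box k p)))"
    by (rule prv_box_mono, rule taut_consequence[of "[]"]) (auto simp: q_def)
  finally show ?thesis .
qed

lemma prv_box_imps: "GLP_prv (Imp (Box k (imps L c)) (imps (map (Box k) L) (Box k c)))"
proof (induction L)
  case Nil
  then show ?case by (intro taut_consequence[of "[]"]) auto
next
  case (Cons a L)
  have "GLP_prv (Imp (Box k (Imp a (imps L c))) (Imp (Box k a) (Box k (imps L c))))"
    by (rule GLP_prv.K)
  with Cons show ?case
    by (intro taut_consequence[of "[Imp (Box k (Imp a (imps L c))) (Imp (Box k a) (Box k (imps L c))),
      Imp (Box k (imps L c)) (imps (map (Box k) L) (Box k c))]"]) auto
qed

definition consistent :: "fm set \<Rightarrow> bool" where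
  "consistent S \<longleftrightarrow> (\<nexists>L. set L \<subseteq> S \<and> GLP_prv (imps L Bot))"

definition mcs :: "fm set \<Rightarrow> bool" where
  "mcs M \<longleftrightarrow> consistent M \<and> (\<forall>x. consistent (insert x M) \<longrightarrow> x \<in> M)"

lemma lindenbaum:
  assumes "consistent S"
  shows "\<exists>M. mcs M \<and> S \<subseteq> M"
proof -
  let ?A = "{T. S \<subseteq> T \<and> consistent T}"
  have "\<exists>U\<in>?A. \<forall>X\<in>C. X \<subseteq> U" if C: "C \<in> chains ?A" for C
  proof (cases "C = {}")
    case True
    then show ?thesis using assms by auto
  next
    case False
    have ch: "subset.chain ?A C" using C by (simp add: chains_alt_def)
    have "consistent (\<Union>C)"
      unfolding consistent_def
    proof
      assume "\<exists>L. set L \<subseteq> \<Union>C \<and> GLP_prv (imps L Bot)"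
      then obtain L where L: "set L \<subseteq> \<Union>C" "GLP_prv (imps L Bot)" by blast
      obtain B where "B \<in> C" "set L \<subseteq> B"
        using finite_subset_Union_chain[OF _ L(1) False ch] by auto
      with L(2) have "\<not> consistent B" unfolding consistent_def by blast
      with \<open>B \<in> C\<close> ch show False by (auto simp: subset.chain_def)
    qed
    moreover have "S \<subseteq> \<Union>C" using False ch unfolding subset.chain_def by blast
    ultimately show ?thesis by blast
  qed
  then have "\<exists>M\<in>?A. \<forall>X\<in>?A. M \<subseteq> X \<longrightarrow> X = M"
    by (intro Zorn_Lemma2 ballI)
  then obtain M where M: "M \<in> ?A" "\<forall>X\<in>?A. M \<subseteq> X \<longrightarrow> X = M" by blast
  then have "mcs M" unfolding mcs_def by blast
  with M show ?thesis by blast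
qed

lemma inconsistent_insert:
  assumes "\<not> consistent (insert x S)"
  obtains L where "set L \<subseteq> S" "GLP_prv (imps L (Neg x))"
proof -
  obtain L where L: "set L \<subseteq> insert x S" "GLP_prv (imps L Bot)"
    using assms by (auto simp: consistent_def)
  let ?L = "filter (\<lambda>a. a \<noteq> x) L"
  have "GLP_prv (imps ?L (Neg x))"
    by (rule taut_consequence[of "[imps L Bot]"]) (use L in auto)
  moreover have "set ?L \<subseteq> S" using L by auto
  ultimately show ?thesis by (rule that[rotated])
qed

lemma mcs_closed:
  assumes "mcs M" "set L \<subseteq> M" "\<forall>a\<in>set P. GLP_prv a"
    and "\<And>v. \<forall>a\<in>set L. beval v a \<Longrightarrow> \<forall>a\<in>set P. beval v a \<Longrightarrow> beval v c"
  shows "c \<in> M"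
proof (rule ccontr)
  assume "c \<notin> M"
  then have "\<not> consistent (insert c M)" using assms(1) by (auto simp: mcs_def)
  then obtain L' where L': "set L' \<subseteq> M" "GLP_prv (imps L' (Neg c))"
    by (rule inconsistent_insert)
  have "GLP_prv (imps (L @ L') Bot)"
  proof (rule taut_consequence[of "imps L' (Neg c) # P"])
    fix v
    assume prems: "\<forall>a\<in>set (imps L' (Neg c) # P). beval v a"
    then have "\<forall>a\<in>set L. beval v a \<Longrightarrow> beval v c" using assms(4) by simp
    with prems show "beval v (imps (L @ L') Bot)" by auto
  qed (use L' assms(3) in auto)
  moreover have "set (L @ L') \<subseteq> M" using L'(1) assms(2) by simp
  ultimately have "\<not> consistent M" unfolding consistent_def by blast
  with assms(1) show False by (simp add: mcs_def)
qed

lemma mcs_prv: "mcs M \<Longrightarrow> GLP_prv c \<Longrightarrow> c \<in> M"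
  by (rule mcs_closed[of M "[]" "[c]"]) auto

lemma mcs_mp: "mcs M \<Longrightarrow> Imp a b \<in> M \<Longrightarrow> a \<in> M \<Longrightarrow> b \<in> M"
  by (rule mcs_closed[of M "[Imp a b, a]" "[]"]) auto

lemma mcs_Bot: "mcs M \<Longrightarrow> Bot \<notin> M"
proof
  assume "mcs M" "Bot \<in> M"
  have "GLP_prv (imps [Bot] Bot)" by (rule taut_consequence[of "[]"]) auto
  moreover have "set [Bot] \<subseteq> M" using \<open>Bot \<in> M\<close> by simp
  ultimately have "\<not> consistent M" unfolding consistent_def by blast
  with \<open>mcs M\<close> show False by (simp add: mcs_def)
qed

lemma mcs_Neg: "mcs M \<Longrightarrow> Neg a \<in> M \<longleftrightarrow> a \<notin> M"
proof
  assume M: "mcs M" "Neg a \<in> M"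
  show "a \<notin> M"
  proof
    assume "a \<in> M"
    with M have "Bot \<in> M" using mcs_mp[of M a Bot] by (simp add: Neg_def)
    with M(1) show False by (simp add: mcs_Bot)
  qed
next
  assume M: "mcs M" and "a \<notin> M"
  then have "\<not> consistent (insert a M)" unfolding mcs_def by blast
  then obtain L where L: "set L \<subseteq> M" "GLP_prv (imps L (Neg a))"
    by (rule inconsistent_insert)
  show "Neg a \<in> M"
    by (rule mcs_closed[of M L "[imps L (Neg a)]"]) (use M L in auto)
qed

definition R0 :: "fm set \<Rightarrow> fm set \<Rightarrow> bool" where
  "R0 M N \<longleftrightarrow> (\<forall>p. Box 0 p \<in> M \<longrightarrow> p \<in> N)"

lemma R0_trans: "mcs M \<Longrightarrow> R0 M N \<Longrightarrow> R0 N K \<Longrightarrow> R0 M K"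
  unfolding R0_def using mcs_mp mcs_prv prv_box_box by blast

lemma R0_witness:
  assumes M: "mcs M" and "Box 0 p \<notin> M"
  obtains N where "mcs N" "R0 M N" "p \<notin> N"
proof -
  have "consistent (insert (Neg p) {q. Box 0 q \<in> M})"
  proof (rule ccontr)
    assume "\<not> consistent (insert (Neg p) {q. Box 0 q \<in> M})"
    then obtain L where L: "set L \<subseteq> {q. Box 0 q \<in> M}" "GLP_prv (imps L (Neg (Neg p)))"
      by (rule inconsistent_insert)
    have "GLP_prv (imps L p)"
      by (rule taut_consequence[of "[imps L (Neg (Neg p))]"]) (use L in auto)
    then have "GLP_prv (imps (map (Box 0) L) (Box 0 p))"
      by (rule GLP_prv.MP[OF prv_box_imps GLP_prv.Nec])
    then have "Box 0 p \<in> M"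
      by (intro mcs_closed[of M "map (Box 0) L" "[imps (map (Box 0) L) (Box 0 p)]"]) (use L(1) M in auto)
    with assms(2) show False by blast
  qed
  then obtain N where "mcs N" "insert (Neg p) {q. Box 0 q \<in> M} \<subseteq> N"
    using lindenbaum by blast
  with mcs_Neg show ?thesis by (intro that) (auto simp: R0_def)
qed

fun Qx :: "fm \<Rightarrow> nat \<Rightarrow> fm \<Rightarrow> fm" where
  "Qx f 0 x = x"
| "Qx f (Suc k) x = Or f (Box 0 (Qx f k x))"

lemma Qx_self: "Qx f k f = Q (Suc k) f"
  by (induction k) auto

lemma Qx_Or_Box: "Qx f k (Or f (Box 0 x)) = Qx f (Suc k) x"
  by (induction k) auto

lemma prv_Qx:
  assumes "GLP_prv x"
  shows "GLP_prv (Qx f k x)"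
proof (induction k)
  case (Suc k)
  then have "GLP_prv (Box 0 (Qx f k x))" by (rule GLP_prv.Nec)
  then show ?case by (intro taut_consequence[of "[Box 0 (Qx f k x)]"]) auto
qed (simp add: assms)

lemma prv_Qx_mono2:
  "GLP_prv (Imp a (Imp b c)) \<Longrightarrow> GLP_prv (Imp (Qx f k a) (Imp (Qx f k b) (Qx f k c)))"
proof (induction k)
  case (Suc k)
  then have "GLP_prv (Imp (Box 0 (Qx f k a)) (Imp (Box 0 (Qx f k b)) (Box 0 (Qx f k c))))"
    by (intro prv_box_mono2)
  then show ?case
    by (intro taut_consequence[of "[Imp (Box 0 (Qx f k a)) (Imp (Box 0 (Qx f k b)) (Box 0 (Qx f k c)))]"]) auto
qed simp

definition Qprv :: "fm \<Rightarrow> fm set" where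
  "Qprv f = {x. \<forall>\<^sub>F k in sequentially. GLP_prv (Qx f k x)}"

lemma prv_in_Qprv: "GLP_prv x \<Longrightarrow> x \<in> Qprv f"
  by (simp add: Qprv_def prv_Qx)

lemma Qprv_mp:
  assumes "Imp a b \<in> Qprv f" "a \<in> Qprv f"
  shows "b \<in> Qprv f"
proof -
  have "GLP_prv (Imp (Imp a b) (Imp a b))" by (rule taut_consequence[of "[]"]) auto
  then have "GLP_prv (Imp (Qx f k (Imp a b)) (Imp (Qx f k a) (Qx f k b)))" for k
    by (rule prv_Qx_mono2)
  then have "GLP_prv (Qx f k b)" if "GLP_prv (Qx f k (Imp a b)) \<and> GLP_prv (Qx f k a)" for k
    using that GLP_prv.MP by blast
  moreover have "\<forall>\<^sub>F k in sequentially. GLP_prv (Qx f k (Imp a b)) \<and> GLP_prv (Qx f k a)"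
    using assms by (simp add: Qprv_def eventually_conj)
  ultimately show ?thesis
    unfolding Qprv_def by (auto elim: eventually_mono)
qed

lemma Qprv_imps: "imps L c \<in> Qprv f \<Longrightarrow> set L \<subseteq> Qprv f \<Longrightarrow> c \<in> Qprv f"
  by (induction L) (auto intro: Qprv_mp)

lemma Qprv_unbox: "Or f (Box 0 x) \<in> Qprv f \<Longrightarrow> x \<in> Qprv f"
  unfolding Qprv_def mem_Collect_eq Qx_Or_Box
  by (subst eventually_sequentially_Suc[of "\<lambda>k. GLP_prv (Qx f k x)", symmetric])

lemma Qprv_self: "f \<in> Qprv f \<Longrightarrow> \<exists>k\<ge>1. GLP_prv (Q k f)"
  by (auto simp: Qprv_def Qx_self eventually_sequentially)

definition step_set :: "fm \<Rightarrow> fm set \<Rightarrow> fm set" where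
  "step_set f M = insert (Neg f) (Qprv f \<union> (\<lambda>p. Neg (Box 0 p)) ` (- M))"

lemma step_set_antimono: "M \<subseteq> M' \<Longrightarrow> step_set f M' \<subseteq> step_set f M"
  by (auto simp: step_set_def)

(* The negated boxes in an inconsistent finite subset combine into \<phi> \<or> [0](p1 \<or> ... \<or> pn),
   which is then a consequence of Qprv \<phi> and hence in it. *)
lemma inconsistent_step_set:
  assumes "\<not> consistent (step_set f M)"
  obtains ps where "set ps \<inter> M = {}" "Ors ps \<in> Qprv f"
proof -
  obtain L where L: "set L \<subseteq> step_set f M" "GLP_prv (imps L Bot)"
    using assms by (auto simp: consistent_def)
  let ?negbox = "\<lambda>p. Neg (Box 0 p)"
  have "finite (?negbox -` set L)" by (rule finite_vimageI) (auto simp: inj_def Neg_def)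
  then obtain ps where ps: "set ps = ?negbox -` set L - M"
    using finite_list by (metis finite_Diff)
  have "GLP_prv (Imp (Box 0 p) (Box 0 (Ors ps)))" if "p \<in> set ps" for p
    by (rule prv_box_mono, rule taut_consequence[of "[]"]) (use that in auto)
  then have "GLP_prv (imps (filter (\<lambda>a. a \<in> Qprv f) L) (Or f (Box 0 (Ors ps))))"
    by (intro taut_consequence[of "imps L Bot # map (\<lambda>p. Imp (Box 0 p) (Box 0 (Ors ps))) ps"])
      (use L ps in \<open>auto simp: step_set_def\<close>)
  then have "Or f (Box 0 (Ors ps)) \<in> Qprv f"
    by (rule Qprv_imps[OF prv_in_Qprv]) auto
  then show ?thesis
    using ps by (intro that) (auto dest: Qprv_unbox)
qed

lemma consistent_step_set_UNIV:
  assumes "\<forall>k\<ge>1. \<not> GLP_prv (Q k f)"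
  shows "consistent (step_set f UNIV)"
proof (rule ccontr)
  assume "\<not> consistent (step_set f UNIV)"
  then obtain ps where "set ps \<inter> UNIV = {}" "Ors ps \<in> Qprv f"
    by (rule inconsistent_step_set)
  then have "Bot \<in> Qprv f" by simp
  moreover have "Imp Bot f \<in> Qprv f"
    by (rule prv_in_Qprv, rule taut_consequence[of "[]"]) auto
  ultimately have "f \<in> Qprv f" by (rule Qprv_mp[rotated])
  with assms show False by (auto dest: Qprv_self)
qed

lemma consistent_step_set_mcs:
  assumes M: "mcs M" and "Qprv f \<subseteq> M"
  shows "consistent (step_set f M)"
proof (rule ccontr)
  assume "\<not> consistent (step_set f M)"
  then obtain ps where ps: "set ps \<inter> M = {}" "Ors ps \<in> Qprv f"
    by (rule inconsistent_step_set)
  have "Bot \<in> M"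
    by (rule mcs_closed[of M "Ors ps # map Neg ps" "[]"]) (use assms ps mcs_Neg in auto)
  with M show False by (simp add: mcs_Bot)
qed

definition extend :: "fm set \<Rightarrow> fm set" where
  "extend S = (SOME M. mcs M \<and> S \<subseteq> M)"

lemma mcs_extend: "consistent S \<Longrightarrow> mcs (extend S) \<and> S \<subseteq> extend S"
  unfolding extend_def by (rule someI_ex, rule lindenbaum)

fun chain :: "fm \<Rightarrow> nat \<Rightarrow> fm set" where
  "chain f 0 = extend (step_set f UNIV)"
| "chain f (Suc n) = extend (step_set f (chain f n))"

definition worlds :: "fm \<Rightarrow> fm set set" where
  "worlds f = {T. mcs T \<and> (\<exists>n. R0 (chain f n) T)}"

definition val :: "fm \<Rightarrow> fm \<Rightarrow> bool" where
  "val f x = (case x of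
      Box 0 p \<Rightarrow> (\<forall>T\<in>worlds f. p \<in> T)
    | Box (Suc 0) p \<Rightarrow> (\<forall>\<^sub>F n in sequentially. p \<in> chain f n \<and> Box 1 p \<in> chain f n)
    | _ \<Rightarrow> True)"

lemma val_Box0 [simp]: "val f (Box 0 p) = (\<forall>T\<in>worlds f. p \<in> T)"
  by (simp add: val_def)

lemma val_Box1 [simp]:
  "val f (Box (Suc 0) p) = (\<forall>\<^sub>F n in sequentially. p \<in> chain f n \<and> Box 1 p \<in> chain f n)"
  by (simp add: val_def)

lemma val_Box_ge2 [simp]: "2 \<le> k \<Longrightarrow> val f (Box k p)"
proof -
  assume "2 \<le> k"
  then obtain j where "k = Suc (Suc j)" using add_2_eq_Suc le_Suc_ex by blast
  then show ?thesis by (simp add: val_def)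
qed

lemma worlds_mcs: "T \<in> worlds f \<Longrightarrow> mcs T"
  by (simp add: worlds_def)

lemma box_index_cases:
  obtains "k = 0" | "k = 1" | "2 \<le> (k::nat)"
  by linarith

context
  fixes f :: fm
  assumes no_Q: "\<forall>k\<ge>1. \<not> GLP_prv (Q k f)"
begin

lemma chain_invariant: "mcs (chain f n) \<and> step_set f UNIV \<subseteq> chain f n"
proof (induction n)
  case 0
  show ?case using mcs_extend[OF consistent_step_set_UNIV[OF no_Q]] by simp
next
  case (Suc n)
  then have "consistent (step_set f (chain f n))"
    by (intro consistent_step_set_mcs) (auto simp: step_set_def)
  then have "mcs (chain f (Suc n)) \<and> step_set f (chain f n) \<subseteq> chain f (Suc n)"
    by (simp add: mcs_extend)
  moreover have "step_set f UNIV \<subseteq> step_set f (chain f n)"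
    by (rule step_set_antimono) simp
  ultimately show ?case by blast
qed

lemma mcs_chain: "mcs (chain f n)"
  using chain_invariant by blast

lemma Neg_in_chain: "Neg f \<in> chain f n"
  using chain_invariant by (auto simp: step_set_def)

lemma R0_chain_Suc: "R0 (chain f (Suc n)) (chain f n)"
proof -
  have "consistent (step_set f (chain f n))"
    using chain_invariant by (intro consistent_step_set_mcs) (auto simp: step_set_def)
  then have step: "step_set f (chain f n) \<subseteq> chain f (Suc n)"
    by (simp add: mcs_extend)
  show ?thesis
    unfolding R0_def
  proof (intro allI impI)
    fix p
    assume p: "Box 0 p \<in> chain f (Suc n)"
    show "p \<in> chain f n"
    proof (rule ccontr)
      assume "p \<notin> chain f n"
      then have "Neg (Box 0 p) \<in> chain f (Suc n)" using step by (auto simp: step_set_def)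
      with p show False using mcs_Neg[OF mcs_chain] by blast
    qed
  qed
qed

lemma R0_chain_less: "m < n \<Longrightarrow> R0 (chain f n) (chain f m)"
proof (induction n)
  case (Suc n)
  show ?case
  proof (cases "m = n")
    case True
    then show ?thesis using R0_chain_Suc by blast
  next
    case False
    with Suc have "R0 (chain f n) (chain f m)" by simp
    with R0_chain_Suc show ?thesis by (rule R0_trans[OF mcs_chain])
  qed
qed simp

lemma chain_in_worlds: "chain f n \<in> worlds f"
  unfolding worlds_def using mcs_chain R0_chain_Suc by blast

lemma worlds_R0_closed: "T \<in> worlds f \<Longrightarrow> mcs U \<Longrightarrow> R0 T U \<Longrightarrow> U \<in> worlds f"
  using R0_trans[OF mcs_chain] by (auto simp: worlds_def)

lemma eventually_R0_chain:
  assumes "T \<in> worlds f"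
  shows "\<forall>\<^sub>F n in sequentially. R0 (chain f n) T"
proof -
  obtain m where m: "R0 (chain f m) T" using assms by (auto simp: worlds_def)
  have "R0 (chain f n) T" if "m \<le> n" for n
    using that m R0_chain_less R0_trans[OF mcs_chain] by (metis le_neq_implies_less)
  then show ?thesis by (auto simp: eventually_sequentially)
qed

lemma Box0_in_worlds:
  assumes T: "T \<in> worlds f" and p: "\<forall>U\<in>worlds f. p \<in> U"
  shows "Box 0 p \<in> T"
proof (rule ccontr)
  assume "Box 0 p \<notin> T"
  then obtain U where "mcs U" "R0 T U" "p \<notin> U"
    using R0_witness worlds_mcs[OF T] by blast
  with T p show False using worlds_R0_closed by blast
qed

lemma val_K: "beval (val f) (Imp (Box k (Imp p q)) (Imp (Box k p) (Box k q)))"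
proof (cases k rule: box_index_cases)
  case 1
  then show ?thesis using worlds_mcs mcs_mp by auto
next
  case 2
  have "q \<in> chain f n \<and> Box 1 q \<in> chain f n"
    if "Imp p q \<in> chain f n \<and> Box 1 (Imp p q) \<in> chain f n" "p \<in> chain f n \<and> Box 1 p \<in> chain f n"
    for n
    using that mcs_mp[OF mcs_chain] mcs_prv[OF mcs_chain GLP_prv.K] by blast
  with 2 show ?thesis by (auto elim: eventually_elim2)
qed simp

lemma val_Loeb: "beval (val f) (Imp (Box k (Imp (Box k p) p)) (Box k p))"
proof (cases k rule: box_index_cases)
  case 1
  have "p \<in> T" if all: "\<forall>U\<in>worlds f. Imp (Box 0 p) p \<in> U" and T: "T \<in> worlds f" for T
  proof (rule ccontr)
    assume "p \<notin> T"
    have T_mcs: "mcs T" using T by (rule worlds_mcs)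
    with \<open>p \<notin> T\<close> all T have "Box 0 p \<notin> T" using mcs_mp by blast
    moreover have "Imp (Box 0 (Imp (Box 0 p) p)) (Box 0 p) \<in> T"
      using T_mcs GLP_prv.Loeb by (rule mcs_prv)
    ultimately have "Box 0 (Imp (Box 0 p) p) \<notin> T" using T_mcs mcs_mp by blast
    then obtain U where "mcs U" "R0 T U" "Imp (Box 0 p) p \<notin> U"
      using R0_witness T_mcs by blast
    with T all show False using worlds_R0_closed by blast
  qed
  with 1 show ?thesis by auto
next
  case 2
  have "p \<in> chain f n \<and> Box 1 p \<in> chain f n"
    if "Imp (Box 1 p) p \<in> chain f n \<and> Box 1 (Imp (Box 1 p) p) \<in> chain f n" for n
    using that mcs_mp[OF mcs_chain] mcs_prv[OF mcs_chain GLP_prv.Loeb] by blast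
  with 2 show ?thesis by (auto elim: eventually_mono)
qed simp

lemma val_Ax3: "j < k \<Longrightarrow> beval (val f) (Imp (Dia j p) (Box k (Dia j p)))"
proof (cases k rule: box_index_cases)
  case 2
  moreover assume "j < k"
  ultimately have j: "j = 0" by simp
  have "\<forall>\<^sub>F n in sequentially. Dia 0 p \<in> chain f n \<and> Box 1 (Dia 0 p) \<in> chain f n"
    if T: "T \<in> worlds f" "Neg p \<notin> T" for T
    using eventually_R0_chain[OF T(1)]
  proof (rule eventually_mono)
    fix n
    assume "R0 (chain f n) T"
    with T(2) have "Box 0 (Neg p) \<notin> chain f n" by (auto simp: R0_def)
    then have "Dia 0 p \<in> chain f n" using mcs_Neg[OF mcs_chain] by (simp add: Dia_def)
    moreover have "Imp (Dia 0 p) (Box 1 (Dia 0 p)) \<in> chain f n"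
      using mcs_chain GLP_prv.Ax3[of 0 1 p] by (simp add: mcs_prv)
    ultimately show "Dia 0 p \<in> chain f n \<and> Box 1 (Dia 0 p) \<in> chain f n"
      using mcs_mp[OF mcs_chain] by blast
  qed
  with 2 j show ?thesis by auto
qed simp_all

lemma val_Ax4: "j \<le> k \<Longrightarrow> beval (val f) (Imp (Box j p) (Box k p))"
proof (cases k rule: box_index_cases)
  case 2
  moreover assume "j \<le> k"
  ultimately consider "j = 1" | "j = 0" by linarith
  then show ?thesis
  proof cases
    case 2
    have "p \<in> chain f n \<and> Box 1 p \<in> chain f n" if "\<forall>T\<in>worlds f. p \<in> T" for n
    proof -
      have "Box 0 p \<in> chain f n" using that chain_in_worlds Box0_in_worlds by blast
      moreover have "Imp (Box 0 p) (Box 1 p) \<in> chain f n"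
        using mcs_chain GLP_prv.Ax4[of 0 1 p] by (simp add: mcs_prv)
      ultimately show ?thesis using that chain_in_worlds mcs_mp[OF mcs_chain] by blast
    qed
    with \<open>k = 1\<close> 2 show ?thesis by simp
  qed (simp add: \<open>k = 1\<close>)
qed simp_all

lemma val_Nec: "GLP_prv p \<Longrightarrow> beval (val f) (Box k p)"
proof (cases k rule: box_index_cases)
  case 1
  then show "GLP_prv p \<Longrightarrow> ?thesis" using worlds_mcs mcs_prv by auto
next
  case 2
  then show "GLP_prv p \<Longrightarrow> ?thesis" using mcs_chain mcs_prv GLP_prv.Nec by auto
qed simp

theorem val_sound: "GLP_prv p \<Longrightarrow> beval (val f) p"
proof (induction rule: GLP_prv.induct)
  case (taut p)
  then show ?case by (simp add: tautology_def)
next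
  case K
  show ?case by (rule val_K)
next
  case Loeb
  show ?case by (rule val_Loeb)
next
  case Ax3
  then show ?case by (rule val_Ax3)
next
  case Ax4
  then show ?case by (rule val_Ax4)
next
  case MP
  then show ?case by simp
next
  case Nec
  then show ?case by (intro val_Nec)
qed

lemma not_prv_Box1: "\<not> GLP_prv (Box 1 f)"
proof
  assume "GLP_prv (Box 1 f)"
  then have "\<forall>\<^sub>F n in sequentially. f \<in> chain f n \<and> Box 1 f \<in> chain f n"
    using val_sound by fastforce
  then obtain n where "f \<in> chain f n" by (auto simp: eventually_sequentially)
  with Neg_in_chain show False using mcs_Neg[OF mcs_chain] by blast
qed

end

(* Either [0]X, and then [1]X by axiom 4, or <0>\<not>X, which is [1]-persistent by axiom 3 and
   under [1] rules out the disjunct [0]X of Q_(k+2) \<phi> = \<phi> \<or> [0]X. *)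
lemma prv_Box1_Q_imp_Box1: "GLP_prv (Imp (Box 1 (Q (Suc k) f)) (Box 1 f))"
proof (induction k)
  case 0
  show ?case by (rule taut_consequence[of "[]"]) auto
next
  case (Suc k)
  define X where "X = Q (Suc k) f"
  have Q_Suc: "Q (Suc (Suc k)) f = Or f (Box 0 X)" by (simp add: X_def)
  have IH: "GLP_prv (Imp (Box 1 X) (Box 1 f))" using Suc.IH by (simp add: X_def)
  have "GLP_prv (Imp (Box 0 X) (Box 0 (Neg (Neg X))))"
    by (rule prv_box_mono, rule taut_consequence[of "[]"]) auto
  then have "GLP_prv (Imp (Or f (Box 0 X)) (Imp (Dia 0 (Neg X)) f))"
    by (intro taut_consequence[of "[Imp (Box 0 X) (Box 0 (Neg (Neg X)))]"]) auto
  then have split: "GLP_prv (Imp (Box 1 (Or f (Box 0 X))) (Imp (Box 1 (Dia 0 (Neg X))) (Box 1 f)))"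
    by (rule prv_box_mono2)
  have dn: "GLP_prv (Imp (Box 0 (Neg (Neg X))) (Box 0 X))"
    by (rule prv_box_mono, rule taut_consequence[of "[]"]) auto
  have Ax4: "GLP_prv (Imp (Box 0 X) (Box 1 X))" by (rule GLP_prv.Ax4) simp
  have Ax3: "GLP_prv (Imp (Dia 0 (Neg X)) (Box 1 (Dia 0 (Neg X))))" by (rule GLP_prv.Ax3) simp
  show ?case
    unfolding Q_Suc
    by (rule taut_consequence[of "[Imp (Box 1 X) (Box 1 f), Imp (Box 0 X) (Box 1 X),
        Imp (Dia 0 (Neg X)) (Box 1 (Dia 0 (Neg X))),
        Imp (Box 1 (Or f (Box 0 X))) (Imp (Box 1 (Dia 0 (Neg X))) (Box 1 f)),
        Imp (Box 0 (Neg (Neg X))) (Box 0 X)]"])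
      (use IH Ax4 Ax3 split dn in auto)
qed

theorem mainTheorem15:
  fixes \<phi> :: fm
  shows "GLP_prv (Box 1 \<phi>) \<longleftrightarrow> (\<exists>k\<ge>1. GLP_prv (Q k \<phi>))"
proof
  assume "GLP_prv (Box 1 \<phi>)"
  then show "\<exists>k\<ge>1. GLP_prv (Q k \<phi>)" using not_prv_Box1 by blast
next
  assume "\<exists>k\<ge>1. GLP_prv (Q k \<phi>)"
  then obtain k where "GLP_prv (Q (Suc k) \<phi>)" by (metis One_nat_def Suc_le_D)
  then have "GLP_prv (Box 1 (Q (Suc k) \<phi>))" by (rule GLP_prv.Nec)
  with prv_Box1_Q_imp_Box1 show "GLP_prv (Box 1 \<phi>)" by (rule GLP_prv.MP)
qed

end
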